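(* Let $f_1,f_2,f_3$ be smooth nowhere-vanishing functions on $\mathbb R^3$ each depending only on $x^1$, $g=\frac{1}{f_1^2}dx^1\otimes dx^1+\frac{1}{f_2^2}dx^2\otimes dx^2+\frac{1}{f_3^2}dx^3\otimes dx^3$, and $V=\sum_{k=1}^3V^kE_k$ with $E_i=f_i\frac{\partial}{\partial x^i}$ and $V^1,V^2,V^3$ smooth functions depending only on $x^1$. Then $V$ is a Killing vector field of $(\mathbb R^3,g)$ if and only if one of the following holds: (i) $V^1=c_1\in\mathbb R\setminus\{0\}$, $V^2=c_2$, $V^3=c_3$ with $c_2,c_3\in\mathbb R$, and $f_2,f_3$ are constant; (ii) $V^1=0$, $V^2=\frac{c_2}{f_2}$, $V^3=\frac{c_3}{f_3}$ with $c_2,c_3\in\mathbb R$.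
   Context: $x^1,x^2,x^3$ are the standard coordinates on $\mathbb R^3$. A vector field $V$ is Killing if $\mathcal L_Vg=0$. *)

theory Defs
  imports "HOL-Analysis.Analysis"
begin

definition smooth_fun :: "(real \<Rightarrow> real) \<Rightarrow> bool" where
  "smooth_fun h \<longleftrightarrow> (\<forall>n x. ((deriv ^^ n) h) differentiable (at x))"

definition partial :: "3 \<Rightarrow> (real^3 \<Rightarrow> real) \<Rightarrow> real^3 \<Rightarrow> real" where
  "partial i F x = deriv (\<lambda>t. F (x + t *\<^sub>R axis i 1)) 0"

definition lie_deriv_metric ::
  "(real^3 \<Rightarrow> real^3) \<Rightarrow> (real^3 \<Rightarrow> real^3^3) \<Rightarrow> real^3 \<Rightarrow> 3 \<Rightarrow> 3 \<Rightarrow> real" where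
  "lie_deriv_metric W G x i j =
     (\<Sum>k\<in>UNIV. W x $ k * partial k (\<lambda>y. G y $ i $ j) x
               + G x $ k $ j * partial i (\<lambda>y. W y $ k) x
               + G x $ i $ k * partial j (\<lambda>y. W y $ k) x)"

definition killing :: "(real^3 \<Rightarrow> real^3) \<Rightarrow> (real^3 \<Rightarrow> real^3^3) \<Rightarrow> bool" where
  "killing W G \<longleftrightarrow> (\<forall>x i j. lie_deriv_metric W G x i j = 0)"

definition diag_metric :: "(3 \<Rightarrow> real \<Rightarrow> real) \<Rightarrow> real^3 \<Rightarrow> real^3^3" where
  "diag_metric f x = (\<chi> i j. if i = j then 1 / (f i (x $ 1))\<^sup>2 else 0)"

text \<open>V = sum_k V^k E_k with E_k = f_k d/dx^k, in coordinate components.\<close>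
definition frame_field :: "(3 \<Rightarrow> real \<Rightarrow> real) \<Rightarrow> (3 \<Rightarrow> real \<Rightarrow> real) \<Rightarrow> real^3 \<Rightarrow> real^3" where
  "frame_field f V x = (\<chi> k. V k (x $ 1) * f k (x $ 1))"

end

theory Submission
  imports Defs
begin

text \<open>Both the metric coefficients \<open>g\<^sub>i\<^sub>i = f\<^sub>i\<^sup>-\<^sup>2\<close> and the coordinate components
  \<open>W\<^sup>k = V\<^sup>k f\<^sub>k\<close> of \<open>V\<close> depend on \<open>x\<^sup>1\<close> alone, so in \<open>(L\<^sub>V g)\<^sub>i\<^sub>j\<close> only \<open>x\<^sup>1\<close>-derivatives
  survive. The \<open>(1,1)\<close> entry reduces to \<open>2 (V\<^sup>1)' / f\<^sub>1\<close>, the \<open>(1,k)\<close> entries to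
  \<open>(V\<^sup>k f\<^sub>k)' / f\<^sub>k\<^sup>2\<close>, and the \<open>(k,k)\<close> entries to \<open>V\<^sup>1 f\<^sub>1 (f\<^sub>k\<^sup>-\<^sup>2)'\<close> for \<open>k \<noteq> 1\<close>; all others
  vanish. So \<open>V\<close> is Killing iff \<open>V\<^sup>1\<close> and \<open>V\<^sup>k f\<^sub>k\<close> are constant and \<open>f\<^sub>2, f\<^sub>3\<close> are constant
  unless \<open>V\<^sup>1 = 0\<close>.\<close>

lemma smooth_fun_differentiable: "smooth_fun h \<Longrightarrow> h differentiable (at x)"
  unfolding smooth_fun_def by (metis funpow_0)

lemma partial_fun_of_first_coord:
  assumes "h differentiable (at (x $ 1))"
  shows "partial k (\<lambda>y. h (y $ 1)) x = (if k = 1 then deriv h (x $ 1) else 0)"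
proof (cases "k = 1")
  case True
  have "(h has_field_derivative deriv h (x $ 1)) (at (0 + x $ 1))"
    using assms by (simp add: DERIV_deriv_iff_real_differentiable)
  then have "((\<lambda>t. h (t + x $ 1)) has_field_derivative deriv h (x $ 1)) (at 0)"
    by (rule DERIV_shift[THEN iffD1])
  then show ?thesis
    using True by (simp add: partial_def axis_def add.commute DERIV_imp_deriv)
next
  case False
  then show ?thesis by (simp add: partial_def axis_def)
qed

lemma has_field_derivative_inverse_square:
  fixes h :: "real \<Rightarrow> real"
  assumes "(h has_field_derivative h') (at t)" "h t \<noteq> 0"
  shows "((\<lambda>s. 1 / (h s)\<^sup>2) has_field_derivative - 2 * h' / (h t) ^ 3) (at t)"
  using assms by (auto intro!: derivative_eq_intros simp: field_simps power2_eq_square power3_eq_cube)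

lemma deriv_zero_imp_constant:
  fixes h :: "real \<Rightarrow> real"
  assumes "\<And>t. h differentiable (at t)" "\<And>t. deriv h t = 0"
  shows "\<exists>c. h = (\<lambda>_. c)"
proof -
  have "(h has_field_derivative 0) (at t)" for t
    using assms by (metis DERIV_deriv_iff_real_differentiable)
  then have "h x = h 0" for x
    by (intro DERIV_isconst_all allI)
  then show ?thesis by blast
qed

definition lie_deriv_diag_frame ::
    "(3 \<Rightarrow> real \<Rightarrow> real) \<Rightarrow> (3 \<Rightarrow> real \<Rightarrow> real) \<Rightarrow> real \<Rightarrow> 3 \<Rightarrow> 3 \<Rightarrow> real" where
  "lie_deriv_diag_frame f V t i j =
      (if i = j then V 1 t * f 1 t * deriv (\<lambda>s. 1 / (f i s)\<^sup>2) t else 0)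
    + (if i = 1 then deriv (\<lambda>s. V j s * f j s) t / (f j t)\<^sup>2 else 0)
    + (if j = 1 then deriv (\<lambda>s. V i s * f i s) t / (f i t)\<^sup>2 else 0)"

lemma lie_deriv_metric_diag_frame:
  fixes f V :: "3 \<Rightarrow> real \<Rightarrow> real"
  assumes f_diff: "\<And>i t. f i differentiable (at t)"
    and f_nz: "\<And>i t. f i t \<noteq> 0"
    and V_diff: "\<And>i t. V i differentiable (at t)"
  shows "lie_deriv_metric (frame_field f V) (diag_metric f) x i j =
    lie_deriv_diag_frame f V (x $ 1) i j"
proof -
  have partial_W: "partial l (\<lambda>y. frame_field f V y $ k) x =
      (if l = 1 then deriv (\<lambda>s. V k s * f k s) (x $ 1) else 0)" for k l
    using partial_fun_of_first_coord[of "\<lambda>s. V k s * f k s" x l] f_diff V_diff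
    by (simp add: frame_field_def differentiable_mult)
  have partial_G: "partial k (\<lambda>y. diag_metric f y $ i $ j) x =
      (if k = 1 \<and> i = j then deriv (\<lambda>s. 1 / (f i s)\<^sup>2) (x $ 1) else 0)" for k
  proof (cases "i = j")
    case True
    have "(\<lambda>s. 1 / (f i s)\<^sup>2) differentiable (at (x $ 1))"
      using has_field_derivative_inverse_square f_diff f_nz
      by (meson DERIV_deriv_iff_real_differentiable real_differentiable_def)
    then show ?thesis
      using True partial_fun_of_first_coord[of "\<lambda>s. 1 / (f i s)\<^sup>2" x k]
      by (simp add: diag_metric_def)
  next
    case False
    then show ?thesis
      using partial_fun_of_first_coord[of "\<lambda>s. 0" x k] by (simp add: diag_metric_def)
  qed
  show ?thesis
    unfolding lie_deriv_metric_def lie_deriv_diag_frame_def partial_W partial_G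
    by (simp add: sum.distrib frame_field_def diag_metric_def if_distrib[of "\<lambda>u. _ * u"]
        if_distrib[of "\<lambda>u. u * _"] cong: if_cong)
qed

lemma lie_deriv_diag_frame_eq_0_iff:
  fixes f V :: "3 \<Rightarrow> real \<Rightarrow> real"
  assumes f_diff: "\<And>i. f i differentiable (at t)"
    and f_nz: "\<And>i. f i t \<noteq> 0"
    and V_diff: "\<And>i. V i differentiable (at t)"
  shows "(\<forall>i j. lie_deriv_diag_frame f V t i j = 0) \<longleftrightarrow>
    deriv (V 1) t = 0 \<and>
    (\<forall>k. k \<noteq> 1 \<longrightarrow> deriv (\<lambda>s. V k s * f k s) t = 0 \<and> (V 1 t = 0 \<or> deriv (f k) t = 0))"
proof -
  have deriv_inverse_square: "deriv (\<lambda>s. 1 / (f k s)\<^sup>2) t = - 2 * deriv (f k) t / (f k t) ^ 3" for k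
    using f_diff[of k] f_nz[of k]
    by (intro DERIV_imp_deriv has_field_derivative_inverse_square)
      (simp_all add: DERIV_deriv_iff_real_differentiable)
  have "(V 1 has_field_derivative deriv (V 1) t) (at t)" "(f 1 has_field_derivative deriv (f 1) t) (at t)"
    using f_diff V_diff by (simp_all add: DERIV_deriv_iff_real_differentiable)
  from DERIV_mult[OF this]
  have deriv_W1: "deriv (\<lambda>s. V 1 s * f 1 s) t = deriv (V 1) t * f 1 t + deriv (f 1) t * V 1 t"
    by (rule DERIV_imp_deriv)
  let ?E = "lie_deriv_diag_frame f V t"
  have E_11: "?E 1 1 = 2 * deriv (V 1) t / f 1 t"
    using f_nz[of 1] unfolding lie_deriv_diag_frame_def deriv_inverse_square deriv_W1
    by (simp add: field_simps power2_eq_square power3_eq_cube)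
  have E_1k: "?E 1 k = deriv (\<lambda>s. V k s * f k s) t / (f k t)\<^sup>2"
    and E_k1: "?E k 1 = deriv (\<lambda>s. V k s * f k s) t / (f k t)\<^sup>2" if "k \<noteq> 1" for k
    using that by (simp_all add: lie_deriv_diag_frame_def)
  have E_kk: "?E k k = - 2 * V 1 t * f 1 t * deriv (f k) t / (f k t) ^ 3" if "k \<noteq> 1" for k
    using that by (simp add: lie_deriv_diag_frame_def deriv_inverse_square)
  have E_kl: "?E k l = 0" if "k \<noteq> l" "k \<noteq> 1" "l \<noteq> 1" for k l
    using that by (simp add: lie_deriv_diag_frame_def)
  have "(\<forall>i j. ?E i j = 0) \<longleftrightarrow> ?E 1 1 = 0 \<and> (\<forall>k. k \<noteq> 1 \<longrightarrow> ?E 1 k = 0 \<and> ?E k k = 0)"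
    using E_1k E_k1 E_kl by metis
  then show ?thesis
    using E_11 E_1k E_kk f_nz by auto
qed

lemma deriv_mult_eq_0_imp_eq_const_divide:
  fixes h g :: "real \<Rightarrow> real"
  assumes "\<And>t. h differentiable (at t)" and "\<And>t. g differentiable (at t)"
    and g_nz: "\<And>t. g t \<noteq> 0"
    and "\<And>t. deriv (\<lambda>s. h s * g s) t = 0"
  shows "\<exists>c. h = (\<lambda>t. c / g t)"
proof -
  obtain c where "(\<lambda>s. h s * g s) = (\<lambda>_. c)"
    using deriv_zero_imp_constant[of "\<lambda>s. h s * g s"] assms by (auto simp: differentiable_mult)
  then have "h = (\<lambda>t. c / g t)"
    using g_nz by (auto simp: fun_eq_iff field_simps)
  then show ?thesis ..
qed

lemma killing_diag_frame_iff:
  fixes f V :: "3 \<Rightarrow> real \<Rightarrow> real"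
  assumes "\<And>i t. f i differentiable (at t)"
    and "\<And>i t. f i t \<noteq> 0"
    and "\<And>i t. V i differentiable (at t)"
  shows "killing (frame_field f V) (diag_metric f) \<longleftrightarrow>
    (\<forall>t. deriv (V 1) t = 0 \<and>
      (\<forall>k. k \<noteq> 1 \<longrightarrow> deriv (\<lambda>s. V k s * f k s) t = 0 \<and> (V 1 t = 0 \<or> deriv (f k) t = 0)))"
proof -
  have "killing (frame_field f V) (diag_metric f) \<longleftrightarrow>
      (\<forall>t i j. lie_deriv_diag_frame f V t i j = 0)"
    unfolding killing_def lie_deriv_metric_diag_frame[OF assms]
  proof (intro iffI allI)
    fix t i j
    assume "\<forall>x::real^3. \<forall>i j. lie_deriv_diag_frame f V (x $ 1) i j = 0"
    then show "lie_deriv_diag_frame f V t i j = 0"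
      using vec_component[of t 1] by metis
  qed simp
  also have "\<dots> \<longleftrightarrow> (\<forall>t. deriv (V 1) t = 0 \<and>
      (\<forall>k. k \<noteq> 1 \<longrightarrow> deriv (\<lambda>s. V k s * f k s) t = 0 \<and> (V 1 t = 0 \<or> deriv (f k) t = 0)))"
    by (simp only: lie_deriv_diag_frame_eq_0_iff[OF assms])
  finally show ?thesis .
qed

theorem mainTheorem7:
  fixes f V :: "3 \<Rightarrow> real \<Rightarrow> real"
  assumes f_smooth: "\<And>i. smooth_fun (f i)"
    and f_nz: "\<And>i t. f i t \<noteq> 0"
    and V_smooth: "\<And>i. smooth_fun (V i)"
  shows "killing (frame_field f V) (diag_metric f) \<longleftrightarrow>
    ((\<exists>c1 c2 c3. c1 \<noteq> 0 \<and> V 1 = (\<lambda>_. c1) \<and> V 2 = (\<lambda>_. c2) \<and> V 3 = (\<lambda>_. c3)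
        \<and> (\<exists>a. f 2 = (\<lambda>_. a)) \<and> (\<exists>b. f 3 = (\<lambda>_. b)))
     \<or> (V 1 = (\<lambda>_. 0) \<and> (\<exists>c2 c3. V 2 = (\<lambda>t. c2 / f 2 t) \<and> V 3 = (\<lambda>t. c3 / f 3 t))))"
proof -
  have f_diff: "\<And>i t. f i differentiable (at t)" and V_diff: "\<And>i t. V i differentiable (at t)"
    using f_smooth V_smooth smooth_fun_differentiable by blast+
  have other_indices: "(\<forall>k::3. k \<noteq> 1 \<longrightarrow> P k) \<longleftrightarrow> P 2 \<and> P 3" for P
    using exhaust_3 by force
  note killing_iff = killing_diag_frame_iff[OF f_diff f_nz V_diff, unfolded other_indices]
  show ?thesis (is "_ \<longleftrightarrow> ?classified")
  proof
    assume "killing (frame_field f V) (diag_metric f)"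
    then have V1': "\<forall>t. deriv (V 1) t = 0"
      and W2': "\<forall>t. deriv (\<lambda>s. V 2 s * f 2 s) t = 0"
      and W3': "\<forall>t. deriv (\<lambda>s. V 3 s * f 3 s) t = 0"
      and f2': "\<forall>t. V 1 t = 0 \<or> deriv (f 2) t = 0"
      and f3': "\<forall>t. V 1 t = 0 \<or> deriv (f 3) t = 0"
      unfolding killing_iff by blast+
    obtain c1 where V1: "V 1 = (\<lambda>_. c1)"
      using deriv_zero_imp_constant[of "V 1"] V_diff V1' by blast
    obtain c2 c3 where V2: "V 2 = (\<lambda>t. c2 / f 2 t)" and V3: "V 3 = (\<lambda>t. c3 / f 3 t)"
      using deriv_mult_eq_0_imp_eq_const_divide[OF V_diff f_diff f_nz] W2' W3' by meson
    show ?classified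
    proof (cases "c1 = 0")
      case True
      then show ?thesis using V1 V2 V3 by auto
    next
      case False
      then have "\<forall>t. deriv (f 2) t = 0" "\<forall>t. deriv (f 3) t = 0"
        using V1 f2' f3' by simp_all
      then obtain a b where f2: "f 2 = (\<lambda>_. a)" and f3: "f 3 = (\<lambda>_. b)"
        using deriv_zero_imp_constant[of "f 2"] deriv_zero_imp_constant[of "f 3"] f_diff by blast
      have "V 2 = (\<lambda>_. c2 / a)" "V 3 = (\<lambda>_. c3 / b)"
        using V2 V3 f2 f3 by simp_all
      then show ?thesis using False V1 f2 f3 by blast
    qed
  next
    assume ?classified
    then show "killing (frame_field f V) (diag_metric f)"
      unfolding killing_iff by (elim disjE exE conjE) (simp_all add: f_nz)
  qed
qed

end
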